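(* For every $n\ge1$ one has $\iota_1(\mathrm{Lie}(n))\subset\mathrm{Vert}(n)$ and $\iota_1(\mathrm{Lie}_1(n))\subset\mathrm{Vert}_1(n)$.
   Context: $\mathrm{Lie}$ is the operad of Lie algebras. $\mathrm{preLie}$ is the operad of (right) pre-Lie algebras, i.e. algebras with a product $\circ$ such that $(a\circ b)\circ c-a\circ(b\circ c)$ is graded symmetric in $b,c$; equivalently, $a\circ[b,c]=(a\circ b)\circ c-(-1)^{|b||c|}(a\circ c)\circ b$ with $[b,c]=b\circ c-(-1)^{|b||c|}c\circ b$. The inclusion of operads $\iota_1\colon\mathrm{Lie}\hookrightarrow\mathrm{preLie}$ sends $[x_1,x_2]$ to $x_1\circ x_2-x_2\circ x_1$. The operads $\mathrm{Lie}_1$ and $\mathrm{preLie}_1$ are the versions with bracket, resp. pre-Lie product, of degree one (obtained by desuspension of the underlying spaces), and $\iota_1\colon\mathrm{Lie}_1\hookrightarrow\mathrm{preLie}_1$ is the corresponding super-analogue. $\mathrm{Vert}(n)\subset\mathrm{preLie}(n)$ (resp. $\mathrm{Vert}_1(n)\subset\mathrm{preLie}_1(n)$) is the $n!$-dimensional subspace spanned by the left-normed products $(\cdots((x_{\sigma_1}\circ x_{\sigma_2})\circ x_{\sigma_3})\circ\cdots)\circ x_{\sigma_n}$ for $\sigma\in S_n$. *)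

theory Defs
  imports Main
begin

(* Binary planar trees with leaves labelled by generator indices:
   monomials of the free (non-associative) magma algebra. *)
datatype tree = Leaf nat | Node tree tree

(* Elements of the free non-associative algebra over 'k on generators x_i :
   coefficient functions on monomials (only finitely supported ones occur). *)
type_synonym 'k fna = "tree \<Rightarrow> 'k"

definition mono :: "tree \<Rightarrow> 'k::field fna" where
  "mono t = (\<lambda>s. if s = t then 1 else 0)"

definition fmult :: "'k::field fna \<Rightarrow> 'k fna \<Rightarrow> 'k fna" where
  "fmult p q = (\<lambda>s. case s of Leaf _ \<Rightarrow> 0 | Node a b \<Rightarrow> p a * q b)"

definition fadd :: "'k::field fna \<Rightarrow> 'k fna \<Rightarrow> 'k fna" where
  "fadd p q = (\<lambda>s. p s + q s)"

definition fsub :: "'k::field fna \<Rightarrow> 'k fna \<Rightarrow> 'k fna" where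
  "fsub p q = (\<lambda>s. p s - q s)"

definition fscale :: "'k::field \<Rightarrow> 'k fna \<Rightarrow> 'k fna" where
  "fscale c p = (\<lambda>s. c * p s)"

definition lin_span :: "'k::field fna set \<Rightarrow> 'k fna set" where
  "lin_span S = {(\<lambda>t. \<Sum>p\<in>F. c p * p t) | F c. finite F \<and> F \<subseteq> S}"

(* parity of a monomial; every generator has parity odd_gen
   (False: ordinary case; True: all generators odd = super case) *)
fun tpar :: "bool \<Rightarrow> tree \<Rightarrow> bool" where
  "tpar od (Leaf i) = od"
| "tpar od (Node a b) = (tpar od a \<noteq> tpar od b)"

definition ksign :: "bool \<Rightarrow> tree \<Rightarrow> tree \<Rightarrow> 'k::field" where
  "ksign od a b = (if tpar od a \<and> tpar od b then -1 else 1)"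

(* graded right pre-Lie relator:
   (a o b) o c - a o (b o c) - (-1)^{|b||c|} ((a o c) o b - a o (c o b)) *)
definition prelie_rel :: "bool \<Rightarrow> tree \<Rightarrow> tree \<Rightarrow> tree \<Rightarrow> 'k::field fna" where
  "prelie_rel od a b c =
     fsub (fsub (mono (Node (Node a b) c)) (mono (Node a (Node b c))))
          (fscale (ksign od b c)
             (fsub (mono (Node (Node a c) b)) (mono (Node a (Node c b)))))"

inductive_set prelie_ideal :: "bool \<Rightarrow> 'k::field fna set" for od where
  rel: "prelie_rel od a b c \<in> prelie_ideal od"
| zero: "(\<lambda>_. 0) \<in> prelie_ideal od"
| add: "p \<in> prelie_ideal od \<Longrightarrow> q \<in> prelie_ideal od \<Longrightarrow> fadd p q \<in> prelie_ideal od"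
| scale: "p \<in> prelie_ideal od \<Longrightarrow> fscale c p \<in> prelie_ideal od"
| lmul: "p \<in> prelie_ideal od \<Longrightarrow> fmult (mono r) p \<in> prelie_ideal od"
| rmul: "p \<in> prelie_ideal od \<Longrightarrow> fmult p (mono r) \<in> prelie_ideal od"

(* iota_1 on a Lie bracket monomial: [a,b] |-> a o b - (-1)^{|a||b|} b o a *)
fun comm_exp :: "bool \<Rightarrow> tree \<Rightarrow> 'k::field fna" where
  "comm_exp od (Leaf i) = mono (Leaf i)"
| "comm_exp od (Node a b) =
     fsub (fmult (comm_exp od a) (comm_exp od b))
          (fscale (ksign od a b) (fmult (comm_exp od b) (comm_exp od a)))"

fun leaves :: "tree \<Rightarrow> nat list" where
  "leaves (Leaf i) = [i]"
| "leaves (Node a b) = leaves a @ leaves b"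

definition multilin :: "nat \<Rightarrow> tree \<Rightarrow> bool" where
  "multilin n t = (sort (leaves t) = [1..<n+1])"

definition Lie_image :: "bool \<Rightarrow> nat \<Rightarrow> 'k::field fna set" where
  "Lie_image od n = lin_span {comm_exp od t | t. multilin n t}"

definition left_normed :: "nat list \<Rightarrow> tree" where
  "left_normed xs = foldl (\<lambda>t j. Node t (Leaf j)) (Leaf (hd xs)) (tl xs)"

definition Vert :: "nat \<Rightarrow> 'k::field fna set" where
  "Vert n = lin_span {mono (left_normed xs) | xs. sort xs = [1..<n+1]}"

(* p lies in the subspace V modulo the pre-Lie ideal, i.e. its class in preLie(n)
   lies in the image of V *)
definition in_mod :: "bool \<Rightarrow> 'k::field fna set \<Rightarrow> 'k fna \<Rightarrow> bool" where
  "in_mod od V p = (\<exists>v\<in>V. fsub p v \<in> prelie_ideal od)"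

end

theory Submission
  imports Defs "HOL-Library.Multiset"
begin

(* In a right pre-Lie algebra right multiplication by a graded commutator is the graded
   commutator of right multiplications: u o [A,B] = (u o A) o B - (-1)^{|A||B|} (u o B) o A.
   The Koszul sign depends only on the multiset of generators, so this relation extends
   bilinearly from monomials to homogeneous combinations. By induction on a bracket monomial
   t, right multiplication by iota_1(t) therefore maps left-normed monomials into the span
   of left-normed monomials modulo the pre-Lie ideal, without changing the multiset of
   generators. Since iota_1[a,b] is a combination of iota_1(a) o iota_1(b) and
   iota_1(b) o iota_1(a), and iota_1 of a generator is a left-normed monomial, every
   iota_1(t) lies in that span; for multilinear t this span is Vert(n). *)

lemma fmult_zero_left: "fmult (\<lambda>_. 0) q = (\<lambda>_. 0)"
  by (rule ext) (simp add: fmult_def split: tree.split)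

lemma fmult_zero_right: "fmult p (\<lambda>_. 0) = (\<lambda>_. 0)"
  by (rule ext) (simp add: fmult_def split: tree.split)

lemma fmult_fadd_left: "fmult (fadd p1 p2) q = fadd (fmult p1 q) (fmult p2 q)"
  by (rule ext) (simp add: fmult_def fadd_def algebra_simps split: tree.split)

lemma fmult_fadd_right: "fmult p (fadd q1 q2) = fadd (fmult p q1) (fmult p q2)"
  by (rule ext) (simp add: fmult_def fadd_def algebra_simps split: tree.split)

lemma fmult_fscale_left: "fmult (fscale c p) q = fscale c (fmult p q)"
  by (rule ext) (simp add: fmult_def fscale_def algebra_simps split: tree.split)

lemma fmult_fscale_right: "fmult p (fscale c q) = fscale c (fmult p q)"
  by (rule ext) (simp add: fmult_def fscale_def algebra_simps split: tree.split)

lemma fmult_fsub_right: "fmult p (fsub q1 q2) = fsub (fmult p q1) (fmult p q2)"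
  by (rule ext) (simp add: fmult_def fsub_def algebra_simps split: tree.split)

lemma fmult_mono_mono: "fmult (mono a) (mono b) = mono (Node a b)"
  by (rule ext) (simp add: fmult_def mono_def split: tree.split)

lemma fsub_eq_fadd_fscale: "fsub p q = fadd p (fscale (-1) q)"
  by (rule ext) (simp add: fsub_def fadd_def fscale_def)

inductive_set hom_span :: "nat multiset \<Rightarrow> 'k::field fna set" for M where
  zero: "(\<lambda>_. 0) \<in> hom_span M"
| mono: "mset (leaves t) = M \<Longrightarrow> mono t \<in> hom_span M"
| add: "p \<in> hom_span M \<Longrightarrow> q \<in> hom_span M \<Longrightarrow> fadd p q \<in> hom_span M"
| scale: "p \<in> hom_span M \<Longrightarrow> fscale c p \<in> hom_span M"

lemma hom_span_fsub: "p \<in> hom_span M \<Longrightarrow> q \<in> hom_span M \<Longrightarrow> fsub p q \<in> hom_span M"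
  by (simp add: fsub_eq_fadd_fscale hom_span.add hom_span.scale)

lemma fmult_hom_span:
  assumes "p \<in> hom_span M" "q \<in> hom_span N"
  shows "fmult p q \<in> hom_span (M + N)"
  using assms
proof (induction p rule: hom_span.induct)
  case (mono s)
  from mono.prems show ?case
  proof (induction q rule: hom_span.induct)
    case (mono t)
    then show ?case using \<open>mset (leaves s) = M\<close> by (simp add: fmult_mono_mono hom_span.mono)
  qed (simp_all add: fmult_zero_right fmult_fadd_right fmult_fscale_right hom_span.intros)
qed (simp_all add: fmult_zero_left fmult_fadd_left fmult_fscale_left hom_span.intros)

lemma comm_exp_hom_span: "(comm_exp od t :: 'k::field fna) \<in> hom_span (mset (leaves t))"
proof (induction t)
  case (Leaf i)
  then show ?case by (simp add: hom_span.mono)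
next
  case (Node a b)
  have "fmult (comm_exp od a) (comm_exp od b) \<in> (hom_span (mset (leaves (Node a b))) :: 'k fna set)"
    using fmult_hom_span[OF Node.IH] by simp
  moreover have "fmult (comm_exp od b) (comm_exp od a) \<in> (hom_span (mset (leaves (Node a b))) :: 'k fna set)"
    using fmult_hom_span[OF Node.IH(2,1)] by (simp add: add.commute)
  ultimately show ?case by (simp add: hom_span_fsub hom_span.scale)
qed

lemma fmult_prelie_ideal_hom_span:
  assumes "p \<in> prelie_ideal od" "q \<in> hom_span M"
  shows "fmult p q \<in> prelie_ideal od"
  using assms(2)
  by induction (simp_all add: assms(1) fmult_zero_right fmult_fadd_right fmult_fscale_right
      prelie_ideal.intros)

lemma tpar_iff: "tpar od t \<longleftrightarrow> od \<and> odd (length (leaves t))"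
  by (induction t) auto

lemma ksign_cong:
  assumes "mset (leaves s) = mset (leaves a)" "mset (leaves t) = mset (leaves b)"
  shows "ksign od s t = ksign od a b"
proof -
  have "length (leaves s) = length (leaves a)" "length (leaves t) = length (leaves b)"
    using assms by (metis size_mset)+
  then show ?thesis by (simp add: ksign_def tpar_iff)
qed

definition prelie_defect :: "'k::field fna \<Rightarrow> 'k fna \<Rightarrow> 'k fna \<Rightarrow> 'k \<Rightarrow> 'k fna" where
  "prelie_defect u A B e =
     fsub (fsub (fmult (fmult u A) B) (fscale e (fmult (fmult u B) A)))
          (fsub (fmult u (fmult A B)) (fscale e (fmult u (fmult B A))))"

lemma prelie_defect_mono:
  "prelie_defect (mono u) (mono a) (mono b) (ksign od a b) = prelie_rel od u a b"
  by (rule ext) (simp add: prelie_defect_def fmult_mono_mono prelie_rel_def fsub_def fscale_def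
      algebra_simps)

lemma prelie_defect_linear_left:
  "prelie_defect u (\<lambda>_. 0) B e = (\<lambda>_. 0)"
  "prelie_defect u (fadd A1 A2) B e = fadd (prelie_defect u A1 B e) (prelie_defect u A2 B e)"
  "prelie_defect u (fscale c A) B e = fscale c (prelie_defect u A B e)"
  by (rule ext; simp add: prelie_defect_def fmult_def fsub_def fscale_def fadd_def algebra_simps
      split: tree.split)+

lemma prelie_defect_linear_right:
  "prelie_defect u A (\<lambda>_. 0) e = (\<lambda>_. 0)"
  "prelie_defect u A (fadd B1 B2) e = fadd (prelie_defect u A B1 e) (prelie_defect u A B2 e)"
  "prelie_defect u A (fscale c B) e = fscale c (prelie_defect u A B e)"
  by (rule ext; simp add: prelie_defect_def fmult_def fsub_def fscale_def fadd_def algebra_simps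
      split: tree.split)+

lemma prelie_defect_in_ideal:
  assumes "(A :: 'k::field fna) \<in> hom_span (mset (leaves a))" "B \<in> hom_span (mset (leaves b))"
  shows "prelie_defect (mono u) A B (ksign od a b) \<in> prelie_ideal od"
  using assms
proof (induction A rule: hom_span.induct)
  case (mono s)
  from mono.prems show ?case
  proof (induction B rule: hom_span.induct)
    case (mono t)
    then have "ksign od a b = (ksign od s t :: 'k)"
      using ksign_cong \<open>mset (leaves s) = mset (leaves a)\<close> by metis
    then show ?case by (simp add: prelie_defect_mono prelie_ideal.rel)
  qed (simp_all add: prelie_defect_linear_right prelie_ideal.intros)
qed (simp_all add: prelie_defect_linear_left prelie_ideal.intros)

inductive_set left_normed_mod :: "bool \<Rightarrow> nat multiset \<Rightarrow> 'k::field fna set" for od M where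
  ideal: "p \<in> prelie_ideal od \<Longrightarrow> p \<in> left_normed_mod od M"
| mono: "mset xs = M \<Longrightarrow> xs \<noteq> [] \<Longrightarrow> mono (left_normed xs) \<in> left_normed_mod od M"
| add: "p \<in> left_normed_mod od M \<Longrightarrow> q \<in> left_normed_mod od M \<Longrightarrow> fadd p q \<in> left_normed_mod od M"
| scale: "p \<in> left_normed_mod od M \<Longrightarrow> fscale c p \<in> left_normed_mod od M"

lemma left_normed_mod_fsub:
  "p \<in> left_normed_mod od M \<Longrightarrow> q \<in> left_normed_mod od M \<Longrightarrow> fsub p q \<in> left_normed_mod od M"
  by (simp add: fsub_eq_fadd_fscale left_normed_mod.add left_normed_mod.scale)

lemma left_normed_mod_cong_ideal:
  assumes "p \<in> left_normed_mod od M" "fsub p q \<in> prelie_ideal od"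
  shows "q \<in> left_normed_mod od M"
proof -
  have "q = fsub p (fsub p q)" by (rule ext) (simp add: fsub_def)
  then show ?thesis using assms by (metis left_normed_mod_fsub left_normed_mod.ideal)
qed

lemma fmult_left_normed_mod:
  assumes "q \<in> hom_span N"
    and "\<And>xs. xs \<noteq> [] \<Longrightarrow> fmult (mono (left_normed xs)) q \<in> left_normed_mod od (mset xs + N)"
    and "p \<in> left_normed_mod od M"
  shows "fmult p q \<in> left_normed_mod od (M + N)"
  using assms(3)
proof induction
  case (ideal p)
  then show ?case using fmult_prelie_ideal_hom_span[OF _ assms(1)] by (simp add: left_normed_mod.ideal)
next
  case (mono xs)
  then show ?case using assms(2) by blast
qed (simp_all add: fmult_fadd_left fmult_fscale_left left_normed_mod.add left_normed_mod.scale)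

lemma left_normed_snoc: "xs \<noteq> [] \<Longrightarrow> left_normed (xs @ [i]) = Node (left_normed xs) (Leaf i)"
  by (cases xs) (simp_all add: left_normed_def)

lemma fmult_left_normed_comm_exp:
  "xs \<noteq> [] \<Longrightarrow> fmult (mono (left_normed xs)) (comm_exp od t)
     \<in> (left_normed_mod od (mset xs + mset (leaves t)) :: 'k::field fna set)"
proof (induction t arbitrary: xs)
  case (Leaf i)
  have "mono (left_normed (xs @ [i]))
      \<in> (left_normed_mod od (mset xs + mset (leaves (Leaf i))) :: 'k fna set)"
    by (rule left_normed_mod.mono) simp_all
  then show ?case using Leaf by (simp add: fmult_mono_mono left_normed_snoc)
next
  case (Node a b)
  define u where "u = (mono (left_normed xs) :: 'k fna)"
  define A where "A = (comm_exp od a :: 'k fna)"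
  define B where "B = (comm_exp od b :: 'k fna)"
  define e where "e = (ksign od a b :: 'k)"
  define M where "M = mset xs + mset (leaves (Node a b))"
  have times_A: "fmult p A \<in> left_normed_mod od (N + mset (leaves a))"
    if "p \<in> left_normed_mod od N" for p N
    unfolding A_def by (rule fmult_left_normed_mod[OF comm_exp_hom_span Node.IH(1) that])
  have times_B: "fmult p B \<in> left_normed_mod od (N + mset (leaves b))"
    if "p \<in> left_normed_mod od N" for p N
    unfolding B_def by (rule fmult_left_normed_mod[OF comm_exp_hom_span Node.IH(2) that])
  have u: "u \<in> left_normed_mod od (mset xs)"
    unfolding u_def using Node.prems by (rule left_normed_mod.mono[OF refl])
  have "fmult (fmult u A) B \<in> left_normed_mod od M"
    using times_B[OF times_A[OF u]] by (simp add: M_def ac_simps)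
  moreover have "fmult (fmult u B) A \<in> left_normed_mod od M"
    using times_A[OF times_B[OF u]] by (simp add: M_def ac_simps)
  ultimately have "fsub (fmult (fmult u A) B) (fscale e (fmult (fmult u B) A))
      \<in> left_normed_mod od M"
    by (simp add: left_normed_mod_fsub left_normed_mod.scale)
  moreover have "prelie_defect u A B e \<in> prelie_ideal od"
    unfolding u_def A_def B_def e_def by (intro prelie_defect_in_ideal comm_exp_hom_span)
  ultimately have "fsub (fmult u (fmult A B)) (fscale e (fmult u (fmult B A)))
      \<in> left_normed_mod od M"
    unfolding prelie_defect_def by (rule left_normed_mod_cong_ideal)
  then show ?case
    by (simp add: u_def A_def B_def e_def M_def fmult_fsub_right fmult_fscale_right)
qed

lemma fmult_comm_exp_left_normed_mod:
  "p \<in> left_normed_mod od M \<Longrightarrow>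
     fmult p (comm_exp od t) \<in> (left_normed_mod od (M + mset (leaves t)) :: 'k::field fna set)"
  by (rule fmult_left_normed_mod[OF comm_exp_hom_span fmult_left_normed_comm_exp])

lemma comm_exp_left_normed_mod:
  "(comm_exp od t :: 'k::field fna) \<in> left_normed_mod od (mset (leaves t))"
proof (induction t)
  case (Leaf i)
  have "mono (left_normed [i]) \<in> (left_normed_mod od (mset (leaves (Leaf i))) :: 'k fna set)"
    by (rule left_normed_mod.mono) simp_all
  then show ?case by (simp add: left_normed_def)
next
  case (Node a b)
  have "fmult (comm_exp od a) (comm_exp od b)
      \<in> (left_normed_mod od (mset (leaves (Node a b))) :: 'k fna set)"
    using fmult_comm_exp_left_normed_mod[OF Node.IH(1)] by simp
  moreover have "fmult (comm_exp od b) (comm_exp od a)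
      \<in> (left_normed_mod od (mset (leaves (Node a b))) :: 'k fna set)"
    using fmult_comm_exp_left_normed_mod[OF Node.IH(2)] by (simp add: add.commute)
  ultimately show ?case by (simp add: left_normed_mod_fsub left_normed_mod.scale)
qed

lemma lin_span_sum: "finite F \<Longrightarrow> F \<subseteq> S \<Longrightarrow> (\<lambda>t. \<Sum>q\<in>F. a q * q t) \<in> lin_span S"
  unfolding lin_span_def by blast

lemma lin_span_zero: "(\<lambda>_. 0) \<in> lin_span S"
  using lin_span_sum[of "{}"] by simp

lemma lin_span_base: "p \<in> S \<Longrightarrow> p \<in> lin_span S"
  using lin_span_sum[of "{p}" S "\<lambda>_. 1"] by simp

lemma lin_span_fscale:
  assumes "p \<in> lin_span S"
  shows "fscale c p \<in> lin_span S"
proof -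
  obtain F a where "finite F" "F \<subseteq> S" and p: "p = (\<lambda>t. \<Sum>q\<in>F. a q * q t)"
    using assms unfolding lin_span_def by blast
  moreover have "fscale c p = (\<lambda>t. \<Sum>q\<in>F. (c * a q) * q t)"
    by (rule ext) (simp add: p fscale_def sum_distrib_left mult.assoc)
  ultimately show ?thesis by (simp add: lin_span_sum)
qed

lemma lin_span_fadd:
  assumes "p \<in> lin_span S" "q \<in> lin_span S"
  shows "fadd p q \<in> lin_span S"
proof -
  obtain F a G b where F: "finite F" "F \<subseteq> S" "p = (\<lambda>t. \<Sum>r\<in>F. a r * r t)"
    and G: "finite G" "G \<subseteq> S" "q = (\<lambda>t. \<Sum>r\<in>G. b r * r t)"
    using assms unfolding lin_span_def by blast
  define c where "c r = (if r \<in> F then a r else 0) + (if r \<in> G then b r else 0)" for r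
  have "fadd p q = (\<lambda>t. \<Sum>r\<in>F \<union> G. c r * r t)"
  proof
    fix t
    have "(\<Sum>r\<in>F \<union> G. c r * r t)
        = (\<Sum>r\<in>F \<union> G. if r \<in> F then a r * r t else 0) + (\<Sum>r\<in>F \<union> G. if r \<in> G then b r * r t else 0)"
      unfolding c_def sum.distrib[symmetric] by (rule sum.cong) (auto simp: distrib_right)
    also have "\<dots> = (\<Sum>r\<in>F. a r * r t) + (\<Sum>r\<in>G. b r * r t)"
      using F(1) G(1) by (simp add: sum.If_cases Int_absorb1 Int_absorb2)
    finally show "fadd p q t = (\<Sum>r\<in>F \<union> G. c r * r t)" by (simp add: F(3) G(3) fadd_def)
  qed
  then show ?thesis using F G by (simp add: lin_span_sum)
qed

lemma lin_span_least:
  assumes "S \<subseteq> L" "(\<lambda>_. 0) \<in> L"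
    and "\<And>p q. p \<in> L \<Longrightarrow> q \<in> L \<Longrightarrow> fadd p q \<in> L"
    and "\<And>c p. p \<in> L \<Longrightarrow> fscale c p \<in> L"
  shows "lin_span S \<subseteq> L"
proof
  fix p assume "p \<in> lin_span S"
  then obtain F a where F: "finite F" "F \<subseteq> S" and p: "p = (\<lambda>t. \<Sum>q\<in>F. a q * q t)"
    unfolding lin_span_def by blast
  from F have "(\<lambda>t. \<Sum>q\<in>F. a q * q t) \<in> L"
  proof (induction F rule: finite_induct)
    case empty
    then show ?case using assms(2) by simp
  next
    case (insert r F)
    then have "r \<in> L" "(\<lambda>t. \<Sum>q\<in>F. a q * q t) \<in> L"
      using assms(1) by auto
    then have "fadd (fscale (a r) r) (\<lambda>t. \<Sum>q\<in>F. a q * q t) \<in> L"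
      using assms(3,4) by blast
    moreover have "fadd (fscale (a r) r) (\<lambda>t. \<Sum>q\<in>F. a q * q t) = (\<lambda>t. \<Sum>q\<in>insert r F. a q * q t)"
      using insert.hyps by (simp add: fadd_def fscale_def)
    ultimately show ?case by simp
  qed
  then show "p \<in> L" using p by simp
qed

lemma in_mod_lin_span_ideal:
  assumes "p \<in> prelie_ideal od"
  shows "in_mod od (lin_span S) p"
proof -
  have "fsub p (\<lambda>_. 0) = p" by (rule ext) (simp add: fsub_def)
  then show ?thesis unfolding in_mod_def using assms lin_span_zero by metis
qed

lemma in_mod_lin_span_base:
  assumes "(p :: 'k::field fna) \<in> S"
  shows "in_mod od (lin_span S) p"
proof -
  have "fsub p p = (\<lambda>_. (0::'k))" by (rule ext) (simp add: fsub_def)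
  then show ?thesis unfolding in_mod_def using assms lin_span_base prelie_ideal.zero by metis
qed

lemma in_mod_lin_span_fadd:
  assumes "in_mod od (lin_span S) p" "in_mod od (lin_span S) q"
  shows "in_mod od (lin_span S) (fadd p q)"
proof -
  obtain v w where "v \<in> lin_span S" "fsub p v \<in> prelie_ideal od"
    and "w \<in> lin_span S" "fsub q w \<in> prelie_ideal od"
    using assms unfolding in_mod_def by blast
  moreover have "fsub (fadd p q) (fadd v w) = fadd (fsub p v) (fsub q w)"
    by (rule ext) (simp add: fsub_def fadd_def)
  ultimately show ?thesis
    unfolding in_mod_def by (metis lin_span_fadd prelie_ideal.add)
qed

lemma in_mod_lin_span_fscale:
  assumes "in_mod od (lin_span S) p"
  shows "in_mod od (lin_span S) (fscale c p)"
proof -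
  obtain v where "v \<in> lin_span S" "fsub p v \<in> prelie_ideal od"
    using assms unfolding in_mod_def by blast
  moreover have "fsub (fscale c p) (fscale c v) = fscale c (fsub p v)"
    by (rule ext) (simp add: fsub_def fscale_def algebra_simps)
  ultimately show ?thesis
    unfolding in_mod_def by (metis lin_span_fscale prelie_ideal.scale)
qed

lemma in_mod_left_normed_mod:
  "(p :: 'k::field fna) \<in> left_normed_mod od M \<Longrightarrow>
     in_mod od (lin_span {mono (left_normed xs) | xs. mset xs = M}) p"
  by (induction rule: left_normed_mod.induct)
    (auto intro: in_mod_lin_span_ideal in_mod_lin_span_base in_mod_lin_span_fadd
      in_mod_lin_span_fscale)

lemma sort_eq_upt_iff: "sort xs = [m..<k] \<longleftrightarrow> mset xs = mset [m..<k]"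
proof
  assume "sort xs = [m..<k]"
  then show "mset xs = mset [m..<k]" by (metis mset_sort)
next
  assume "mset xs = mset [m..<k]"
  then have "sort xs = sort [m..<k]" by (metis sorted_list_of_multiset_mset)
  then show "sort xs = [m..<k]" by (simp add: sorted_sort_id)
qed

lemma Vert_eq_lin_span_mset:
  "Vert n = lin_span {mono (left_normed xs) | xs. mset xs = mset [1..<n+1]}"
  unfolding Vert_def sort_eq_upt_iff ..

lemma Lie_image_subset_left_normed_mod:
  "(Lie_image od n :: 'k::field fna set) \<subseteq> left_normed_mod od (mset [1..<n+1])"
  unfolding Lie_image_def
proof (rule lin_span_least)
  show "{comm_exp od t |t. multilin n t} \<subseteq> (left_normed_mod od (mset [1..<n+1]) :: 'k fna set)"
  proof
    fix p assume "p \<in> {comm_exp od t |t. multilin n t}"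
    then obtain t where "p = comm_exp od t" "mset (leaves t) = mset [1..<n+1]"
      unfolding multilin_def sort_eq_upt_iff by blast
    then show "p \<in> left_normed_mod od (mset [1..<n+1])"
      using comm_exp_left_normed_mod by metis
  qed
qed (auto intro: left_normed_mod.intros prelie_ideal.zero)

theorem lemma5p5:
  fixes n :: nat
  assumes "n \<ge> 1"
  shows "(\<forall>p \<in> (Lie_image False n :: 'k::field_char_0 fna set). in_mod False (Vert n) p)
       \<and> (\<forall>p \<in> (Lie_image True n :: 'k fna set). in_mod True (Vert n) p)"
proof -
  have "in_mod od (Vert n) p" if "(p :: 'k fna) \<in> Lie_image od n" for od p
  proof -
    have "p \<in> left_normed_mod od (mset [1..<n+1])"
      using that Lie_image_subset_left_normed_mod by blast
    then show ?thesis unfolding Vert_eq_lin_span_mset by (rule in_mod_left_normed_mod)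
  qed
  then show ?thesis by blast
qed

end
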